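(* Let $G$ be a finite group and $p$ a prime such that $G$ has no redundant Sylow $p$-subgroup. Then $|G_p|\geq \nu_p(G)$.
   Context: For a finite group $G$ and a prime $p$, $G_p$ denotes the set of $p$-elements of $G$, $\mathrm{Syl}_p(G)$ the set of Sylow $p$-subgroups of $G$, and $\nu_p(G)=|\mathrm{Syl}_p(G)|$. $G$ is said to have a redundant Sylow $p$-subgroup if $G_p$ is contained in the union of the members of some proper subset of $\mathrm{Syl}_p(G)$. *)

theory Defs
  imports "HOL-Algebra.Algebra"
begin

definition p_elements :: "('a, 'b) monoid_scheme \<Rightarrow> nat \<Rightarrow> 'a set" where
  "p_elements G p = {x \<in> carrier G. \<exists>k::nat. group.ord G x = p ^ k}"

definition Syl :: "('a, 'b) monoid_scheme \<Rightarrow> nat \<Rightarrow> 'a set set" where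
  "Syl G p = {P. subgroup P G \<and> card P = p ^ multiplicity p (order G)}"

definition nu :: "('a, 'b) monoid_scheme \<Rightarrow> nat \<Rightarrow> nat" where
  "nu G p = card (Syl G p)"

definition has_redundant_Sylow :: "('a, 'b) monoid_scheme \<Rightarrow> nat \<Rightarrow> bool" where
  "has_redundant_Sylow G p \<longleftrightarrow> (\<exists>S. S \<subset> Syl G p \<and> p_elements G p \<subseteq> \<Union>S)"

end

theory Submission
  imports Defs
begin

(* Every p-element x lies in a Sylow p-subgroup: the p-group generated by x acts on the left
   cosets of a Sylow subgroup P, whose number is prime to p, so it fixes some coset gP, and then
   x lies in the conjugate gPg^-1.  Thus Syl_p(G) covers G_p.  If no Sylow subgroup is redundant
   in this cover, each P contains a p-element lying in no other Sylow subgroup, which gives an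
   injection from Syl_p(G) into G_p. *)

lemma irredundant_cover_card_le:
  assumes "finite E" and cover: "E \<subseteq> \<Union>S"
    and irredundant: "\<And>S'. S' \<subset> S \<Longrightarrow> \<not> E \<subseteq> \<Union>S'"
  shows "card S \<le> card E"
proof -
  have "\<exists>x. x \<in> E - \<Union>(S - {A})" if "A \<in> S" for A
  proof -
    from that have "S - {A} \<subset> S" by auto
    then have "\<not> E \<subseteq> \<Union>(S - {A})" by (rule irredundant)
    then show ?thesis by blast
  qed
  then obtain c where c: "\<And>A. A \<in> S \<Longrightarrow> c A \<in> E - \<Union>(S - {A})"
    by metis
  have c_mem: "c A \<in> A" if "A \<in> S" for A
    using c[OF that] cover by blast
  have "inj_on c S"
  proof (rule inj_onI)
    fix A B assume A: "A \<in> S" and B: "B \<in> S" and eq: "c A = c B"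
    show "A = B"
    proof (rule ccontr)
      assume "A \<noteq> B"
      with B have "B \<in> S - {A}" by blast
      moreover have "c A \<in> B" using c_mem[OF B] eq by simp
      ultimately show False using c[OF A] by blast
    qed
  qed
  moreover have "c ` S \<subseteq> E" using c by blast
  ultimately show ?thesis
    using card_inj_on_le \<open>finite E\<close> by blast
qed

lemma (in group) group_actionI:
  assumes closed: "\<And>g x. g \<in> carrier G \<Longrightarrow> x \<in> E \<Longrightarrow> \<phi> g x \<in> E"
    and one: "\<And>x. x \<in> E \<Longrightarrow> \<phi> \<one> x = x"
    and mult: "\<And>g h x. g \<in> carrier G \<Longrightarrow> h \<in> carrier G \<Longrightarrow> x \<in> E \<Longrightarrow>
                 \<phi> (g \<otimes> h) x = \<phi> g (\<phi> h x)"
    and ext: "\<And>g. g \<in> carrier G \<Longrightarrow> \<phi> g \<in> extensional E"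
  shows "group_action G E \<phi>"
proof -
  have bij: "bij_betw (\<phi> g) E E" if g: "g \<in> carrier G" for g
  proof (rule bij_betw_byWitness[where f' = "\<phi> (inv g)"])
    show "\<forall>x\<in>E. \<phi> (inv g) (\<phi> g x) = x" "\<forall>x\<in>E. \<phi> g (\<phi> (inv g) x) = x"
      using g by (simp_all flip: mult add: one)
  qed (use g closed in auto)
  have "\<phi> \<in> hom G (BijGroup E)"
  proof (rule homI)
    show "\<phi> g \<in> carrier (BijGroup E)" if "g \<in> carrier G" for g
      using bij ext that by (simp add: BijGroup_def Bij_def)
    show "\<phi> (g \<otimes> h) = \<phi> g \<otimes>\<^bsub>BijGroup E\<^esub> \<phi> h"
      if "g \<in> carrier G" "h \<in> carrier G" for g h
      using that bij ext
      by (intro extensionalityI[where A = E]) (auto simp: BijGroup_def Bij_def compose_def mult)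
  qed
  then show ?thesis
    by (simp add: group_action_def group_hom_def group_hom_axioms_def is_group group_BijGroup)
qed

lemma (in group) action_on_lcosets:
  assumes "subgroup P G"
  shows "group_action G (lcosets P) (\<lambda>g. \<lambda>C \<in> lcosets P. g <# C)"
proof (rule group_actionI)
  have P: "P \<subseteq> carrier G"
    using assms subgroup.subset by blast
  have sub: "C \<subseteq> carrier G" if "C \<in> lcosets P" for C
    using that lcosets_subset_PowG[OF assms] by blast
  have closed: "g <# C \<in> lcosets P"
    if g: "g \<in> carrier G" and C: "C \<in> lcosets P" for g C
  proof -
    obtain x where x: "x \<in> carrier G" "C = x <# P"
      using C unfolding LCOSETS_def by blast
    then have "g <# C = (g \<otimes> x) <# P"
      using g P by (simp add: lcos_m_assoc)
    then show ?thesis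
      using x(1) g unfolding LCOSETS_def by blast
  qed
  then show "(\<lambda>C \<in> lcosets P. g <# C) C \<in> lcosets P"
    if "g \<in> carrier G" "C \<in> lcosets P" for g C
    using that by simp
  show "(\<lambda>C \<in> lcosets P. \<one> <# C) C = C" if "C \<in> lcosets P" for C
    using that sub by (simp add: lcos_mult_one)
  show "(\<lambda>C \<in> lcosets P. (g \<otimes> h) <# C) C
        = (\<lambda>C \<in> lcosets P. g <# C) ((\<lambda>C \<in> lcosets P. h <# C) C)"
    if "g \<in> carrier G" "h \<in> carrier G" "C \<in> lcosets P" for g h C
    using that closed[of h C] sub[of C] by (simp add: lcos_m_assoc)
qed simp

lemma (in group_action) p_group_fixed_point:
  assumes "finite E" and p: "Factorial_Ring.prime p" and order: "order G = p ^ k"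
    and "\<not> p dvd card E"
  obtains x where "x \<in> E" "\<And>g. g \<in> carrier G \<Longrightarrow> \<phi> g x = x"
proof (rule ccontr)
  assume "\<not> thesis"
  then have moved: "\<forall>x\<in>E. \<exists>g\<in>carrier G. \<phi> g x \<noteq> x"
    using that by blast
  have "p dvd card Orb" if Orb: "Orb \<in> orbits G E \<phi>" for Orb
  proof -
    obtain x where x: "x \<in> E" "Orb = orbit G \<phi> x"
      using Orb unfolding orbits_def by blast
    have "card Orb dvd p ^ k"
      using orbit_stabilizer_theorem[OF x(1)] order x(2) by (metis dvd_triv_left)
    then obtain j where j: "card Orb = p ^ j"
      using divides_primepow_nat[OF p] by blast
    have "j \<noteq> 0"
    proof
      assume "j = 0"
      then have "Orb = {x}"
        using j x orbit_refl by (metis card_1_singletonE power_0 singletonD)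
      then show False
        using moved x unfolding orbit_def by blast
    qed
    then show "p dvd card Orb" using j by simp
  qed
  then have "p dvd (\<Sum>Orb\<in>orbits G E \<phi>. card Orb)"
    by (rule dvd_sum)
  also have "(\<Sum>Orb\<in>orbits G E \<phi>. card Orb) = card E"
    using disjoint_sum[OF \<open>finite E\<close>, of "\<lambda>_. 1 :: nat"] by (simp flip: card_eq_sum)
  finally show False using \<open>\<not> p dvd card E\<close> by contradiction
qed

lemma (in group) exists_Sylow:
  assumes "finite (carrier G)" and "Factorial_Ring.prime p"
  obtains P where "P \<in> Syl G p"
proof -
  let ?a = "multiplicity p (order G)"
  have "order G = p ^ ?a * (order G div p ^ ?a)"
    by (metis multiplicity_dvd dvd_mult_div_cancel)
  then show thesis
    using sylow_thm[OF assms(2) is_group _ assms(1)] that unfolding Syl_def by blast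
qed

lemma (in group) Sylow_index_not_dvd:
  assumes "finite (carrier G)" and "Factorial_Ring.prime p" and "P \<in> Syl G p"
  shows "\<not> p dvd card (lcosets P)"
proof
  let ?a = "multiplicity p (order G)"
  assume "p dvd card (lcosets P)"
  then have "p * p ^ ?a dvd card (lcosets P) * card P"
    using assms(3) unfolding Syl_def by simp
  also have "card (lcosets P) * card P = order G"
    using l_lagrange[OF assms(1)] assms(3) unfolding Syl_def by blast
  finally have "p ^ Suc ?a dvd order G"
    by simp
  moreover have "order G \<noteq> 0"
    using assms(1) order_gt_0_iff_finite by simp
  ultimately have "Suc ?a \<le> ?a"
    using power_dvd_iff_le_multiplicity not_prime_unit assms(2) by blast
  then show False by simp
qed

lemma (in group) conjugate_Sylow:
  assumes "P \<in> Syl G p" and g: "g \<in> carrier G"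
  shows "g <# P #> inv g \<in> Syl G p"
proof -
  have P: "subgroup P G" "P \<subseteq> carrier G"
    using assms(1) subgroup.subset unfolding Syl_def by auto
  have "subgroup (g <# P #> inv g) G"
    using subgroup_conjugation_is_surj1[of "inv g" P] P g by simp
  moreover have "g <# P #> inv g = (\<lambda>h. g \<otimes> h \<otimes> inv g) ` P"
    by (auto simp: l_coset_def r_coset_def)
  moreover have "inj_on (\<lambda>h. g \<otimes> h \<otimes> inv g) P"
    by (rule inj_onI) (use conjugation_is_inj g P(2) in blast)
  ultimately show ?thesis
    using assms(1) unfolding Syl_def by (simp add: card_image)
qed

lemma (in group) p_subgroup_subset_Sylow:
  assumes fin: "finite (carrier G)" and p: "Factorial_Ring.prime p"
    and H: "subgroup H G" "card H = p ^ k"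
  obtains Q where "Q \<in> Syl G p" "H \<subseteq> Q"
proof -
  obtain P where P: "P \<in> Syl G p"
    using exists_Sylow fin p by blast
  then have subP: "subgroup P G" and PG: "P \<subseteq> carrier G"
    unfolding Syl_def using subgroup.subset by auto
  interpret H_on_cosets:
    group_action "G\<lparr>carrier := H\<rparr>" "lcosets P" "\<lambda>g. \<lambda>C \<in> lcosets P. g <# C"
    using group_action.induced_action[OF action_on_lcosets[OF subP] H(1)] .
  have "finite (lcosets P)"
    by (rule finite_subset[OF lcosets_subset_PowG[OF subP]]) (simp add: fin)
  moreover have "order (G\<lparr>carrier := H\<rparr>) = p ^ k"
    using H(2) by (simp add: order_def)
  ultimately obtain C where C: "C \<in> lcosets P"
    and fixed: "\<And>h. h \<in> H \<Longrightarrow> (\<lambda>C \<in> lcosets P. h <# C) C = C"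
    using H_on_cosets.p_group_fixed_point[OF _ p _ Sylow_index_not_dvd[OF fin p P]] by auto
  then obtain g where g: "g \<in> carrier G" "C = g <# P"
    unfolding LCOSETS_def by blast
  have "H \<subseteq> g <# P #> inv g"
  proof
    fix h assume h: "h \<in> H"
    then have hG: "h \<in> carrier G"
      using subgroup.mem_carrier[OF H(1)] by blast
    have "g \<in> C"
      using lcos_self[OF g(1) subP] g(2) by simp
    then have "h \<otimes> g \<in> h <# C"
      by (auto simp: l_coset_def)
    then have "h \<otimes> g \<in> g <# P"
      using fixed[OF h] C g(2) by simp
    then obtain q where q: "q \<in> P" "h \<otimes> g = g \<otimes> q"
      unfolding l_coset_def by blast
    then have "h = g \<otimes> q \<otimes> inv g"
      using hG g(1) PG by (metis inv_solve_right m_closed subsetD)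
    then show "h \<in> g <# P #> inv g"
      using q(1) unfolding l_coset_def r_coset_def by blast
  qed
  then show thesis
    by (rule that[OF conjugate_Sylow[OF P g(1)]])
qed

lemma (in group) p_elements_subset_Union_Syl:
  assumes "finite (carrier G)" and "Factorial_Ring.prime p"
  shows "p_elements G p \<subseteq> \<Union>(Syl G p)"
proof
  fix x assume "x \<in> p_elements G p"
  then obtain k where x: "x \<in> carrier G" "ord x = p ^ k"
    unfolding p_elements_def by blast
  have "subgroup (generate G {x}) G" "card (generate G {x}) = p ^ k"
    using generate_is_subgroup generate_pow_card x by auto
  then obtain Q where "Q \<in> Syl G p" "generate G {x} \<subseteq> Q"
    by (rule p_subgroup_subset_Sylow[OF assms])
  moreover have "x \<in> generate G {x}"
    by (rule generate.incl) simp
  ultimately show "x \<in> \<Union>(Syl G p)" by blast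
qed

theorem corollary2p7:
  fixes G :: "('a, 'b) monoid_scheme" and p :: nat
  assumes "group G" and "finite (carrier G)" and "Factorial_Ring.prime p"
    and "\<not> has_redundant_Sylow G p"
  shows "card (p_elements G p) \<ge> nu G p"
proof -
  interpret group G by fact
  have "finite (p_elements G p)"
    using assms(2) unfolding p_elements_def by simp
  moreover have "p_elements G p \<subseteq> \<Union>(Syl G p)"
    using p_elements_subset_Union_Syl assms(2,3) .
  moreover have "\<not> p_elements G p \<subseteq> \<Union>S" if "S \<subset> Syl G p" for S
    using assms(4) that unfolding has_redundant_Sylow_def by blast
  ultimately show ?thesis
    unfolding nu_def by (rule irredundant_cover_card_le)
qed

end
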